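(* If a set $W\subseteq V$ with $|W|=3$ can be generated from some connected pair, then there exists $X\supseteq W$ such that $D[X]$ is a directed sub-block, and some $i\in W$ is reachable from all other nodes both in $D[W]$ and in $D[X]$.
   Context: $D=(V,A)$ is a directed graph. $\mathrm{IN}(X)$ is the set of nodes from which some member of $X$ is reachable by a directed path. For disjoint nonempty $X,Y,Z$, $f_E(X,Y,Z)=1$ iff $\mathrm{IN}(X)\cap\mathrm{IN}(Y)=\emptyset$ computed in $D-Z$; node $j$ is dynamically partitioning relative to $k$ and $Y$ iff $f_E(\{k\},Y,\{j\})=1$. A connected pair is a set $\{i,j\}$ joined by an arc in some direction. A set $W_n$ of size $n$ can be generated from $W_m$ of size $m$, $2\le m<n$, iff there are sets $W_m\subset\dots\subset W_n$ with $W_{l+1}=W_l\cup\{k\}$, $k\in V\setminus W_l$, such that there is an arc from $k$ to some $j\in W_l$ that is not dynamically partitioning relative to $k$ and $W_l\setminus\{j\}$. $D[W]$ is the subgraph induced on $W$; reachability in $D[W]$ is via directed paths inside $D[W]$. A graph is biconnected if it has at least three vertices, is connected and remains connected after deleting any one vertex. $D[X]$ is a directed sub-block if some node of $X$ is reachable within $D[X]$ from all other nodes and the underlying undirected graph of $D[X]$ is biconnected. *)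

theory Defs
  imports Main
begin

definition reach_in :: "('a \<times> 'a) set \<Rightarrow> 'a set \<Rightarrow> 'a \<Rightarrow> 'a \<Rightarrow> bool" where
  "reach_in A S u v \<longleftrightarrow> u \<in> S \<and> v \<in> S \<and> (u, v) \<in> (A \<inter> (S \<times> S))\<^sup>*"

definition IN_set :: "('a \<times> 'a) set \<Rightarrow> 'a set \<Rightarrow> 'a set \<Rightarrow> 'a set" where
  "IN_set A S X = {u \<in> S. \<exists>x\<in>X. reach_in A S u x}"

definition f_E :: "'a set \<Rightarrow> ('a \<times> 'a) set \<Rightarrow> 'a set \<Rightarrow> 'a set \<Rightarrow> 'a set \<Rightarrow> bool" where
  "f_E V A X Y Z \<longleftrightarrow> IN_set A (V - Z) X \<inter> IN_set A (V - Z) Y = {}"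

definition dyn_partitioning :: "'a set \<Rightarrow> ('a \<times> 'a) set \<Rightarrow> 'a \<Rightarrow> 'a \<Rightarrow> 'a set \<Rightarrow> bool" where
  "dyn_partitioning V A j k Y \<longleftrightarrow> f_E V A {k} Y {j}"

definition connected_pair :: "'a set \<Rightarrow> ('a \<times> 'a) set \<Rightarrow> 'a set \<Rightarrow> bool" where
  "connected_pair V A P \<longleftrightarrow> (\<exists>i j. i \<in> V \<and> j \<in> V \<and> i \<noteq> j \<and> P = {i, j} \<and> ((i, j) \<in> A \<or> (j, i) \<in> A))"

definition gen_step :: "'a set \<Rightarrow> ('a \<times> 'a) set \<Rightarrow> 'a set \<Rightarrow> 'a set \<Rightarrow> bool" where
  "gen_step V A Wl Wl' \<longleftrightarrow> (\<exists>k \<in> V - Wl. Wl' = insert k Wl \<and>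
      (\<exists>j \<in> Wl. (k, j) \<in> A \<and> \<not> dyn_partitioning V A j k (Wl - {j})))"

definition generated_from :: "'a set \<Rightarrow> ('a \<times> 'a) set \<Rightarrow> 'a set \<Rightarrow> 'a set \<Rightarrow> bool" where
  "generated_from V A W W' \<longleftrightarrow> finite W \<and> finite W' \<and> 2 \<le> card W \<and> card W < card W'
     \<and> (gen_step V A)\<^sup>*\<^sup>* W W'"

definition und_adj :: "('a \<times> 'a) set \<Rightarrow> 'a set \<Rightarrow> ('a \<times> 'a) set" where
  "und_adj A S = {(u, v). u \<in> S \<and> v \<in> S \<and> u \<noteq> v \<and> ((u, v) \<in> A \<or> (v, u) \<in> A)}"

definition und_connected :: "('a \<times> 'a) set \<Rightarrow> 'a set \<Rightarrow> bool" where
  "und_connected A S \<longleftrightarrow> (\<forall>u\<in>S. \<forall>v\<in>S. (u, v) \<in> (und_adj A S)\<^sup>*)"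

definition biconnected :: "('a \<times> 'a) set \<Rightarrow> 'a set \<Rightarrow> bool" where
  "biconnected A S \<longleftrightarrow> finite S \<and> 3 \<le> card S \<and> und_connected A S \<and>
     (\<forall>v\<in>S. und_connected A (S - {v}))"

definition directed_sub_block :: "('a \<times> 'a) set \<Rightarrow> 'a set \<Rightarrow> bool" where
  "directed_sub_block A X \<longleftrightarrow> (\<exists>r\<in>X. \<forall>v\<in>X. reach_in A X v r) \<and> biconnected A X"

end

theory Submission
  imports Defs "HOL-Library.Transitive_Closure_Table"
begin

text \<open>Write \<open>W = {a, b, k}\<close>, where \<open>{a, b}\<close> is the connected pair and \<open>k\<close> the generated node with
  \<open>(k, a) \<in> A\<close>. That \<open>a\<close> is not dynamically partitioning means that in \<open>D - a\<close> some node \<open>u\<close>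
  reaches both \<open>k\<close> and \<open>b\<close>. From the last node \<open>w\<close> of a simple \<open>u\<close>-\<open>k\<close> path that lies on a
  simple \<open>u\<close>-\<open>b\<close> path, we get two internally disjoint directed paths \<open>w \<leadsto> k\<close> and \<open>w \<leadsto> b\<close>;
  closed up by the arc \<open>k \<rightarrow> a\<close> and the arc between \<open>a\<close> and \<open>b\<close> they form an undirected cycle \<open>X\<close>,
  which is biconnected. Every node of \<open>X\<close> reaches \<open>k\<close> or \<open>b\<close> or is \<open>a\<close>, so whichever of \<open>a\<close>, \<open>b\<close>
  is the head of the arc between them is a common sink of \<open>D[X]\<close>, and likewise of \<open>D[W]\<close>.\<close>

abbreviation walk :: "('a \<times> 'a) set \<Rightarrow> 'a list \<Rightarrow> bool" where
  "walk R p \<equiv> successively (\<lambda>x y. (x, y) \<in> R) p"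

lemma rtrancl_obtain_distinct_walk:
  assumes "(u, v) \<in> R\<^sup>*"
  obtains p where "p \<noteq> []" "hd p = u" "last p = v" "walk R p" "distinct p"
proof -
  have "(\<lambda>x y. (x, y) \<in> R)\<^sup>*\<^sup>* u v" using assms by (simp add: rtrancl_def)
  then obtain xs where "rtrancl_path (\<lambda>x y. (x, y) \<in> R) u xs v"
    by (auto simp: rtranclp_eq_rtrancl_path)
  then obtain xs' where p: "rtrancl_path (\<lambda>x y. (x, y) \<in> R) u xs' v" "distinct (u # xs')"
    by (rule rtrancl_path_distinct)
  from p(1) have "walk R (u # xs') \<and> last (u # xs') = v"
    by (induction rule: rtrancl_path.induct) auto
  with p(2) show thesis by (intro that[of "u # xs'"]) auto
qed

lemma walk_rtrancl_last: "walk R p \<Longrightarrow> x \<in> set p \<Longrightarrow> (x, last p) \<in> R\<^sup>*"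
proof (induction p arbitrary: x rule: induct_list012)
  case (3 a b zs)
  then have "(b, last (b # zs)) \<in> R\<^sup>*" by auto
  with 3 show ?case by (auto intro: converse_rtrancl_into_rtrancl)
qed auto

lemma rtrancl_restrict_source_mem: "(x, y) \<in> (A \<inter> S \<times> S)\<^sup>* \<Longrightarrow> y \<in> S \<Longrightarrow> x \<in> S"
  by (induction rule: converse_rtrancl_induct) auto

lemma successively_mono_distinct:
  assumes "successively P p" "distinct p"
    and "\<And>x y. x \<in> set p \<Longrightarrow> y \<in> set p \<Longrightarrow> x \<noteq> y \<Longrightarrow> P x y \<Longrightarrow> Q x y"
  shows "successively Q p"
  using assms by (induction p rule: induct_list012) auto

lemma walks_obtain_last_meet:
  assumes "(u, k) \<in> R\<^sup>*" "(u, b) \<in> R\<^sup>*"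
  obtains w ys ts where "walk R (w # ys)" "last (w # ys) = k"
    "walk R (w # ts)" "last (w # ts) = b" "distinct (w # ys @ ts)"
proof -
  obtain p where p: "p \<noteq> []" "hd p = u" "last p = k" "walk R p" "distinct p"
    using assms(1) by (rule rtrancl_obtain_distinct_walk)
  obtain q where q: "q \<noteq> []" "hd q = u" "last q = b" "walk R q" "distinct q"
    using assms(2) by (rule rtrancl_obtain_distinct_walk)
  have "\<exists>x\<in>set p. x \<in> set q" using p q by (metis hd_in_set)
  then obtain xs w ys where p_split: "p = xs @ w # ys" "w \<in> set q" "\<forall>y\<in>set ys. y \<notin> set q"
    by (rule split_list_last_propE)
  obtain zs ts where q_split: "q = zs @ w # ts" using p_split(2) by (meson split_list)
  show thesis
  proof
    show "walk R (w # ys)" "last (w # ys) = k"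
      using p unfolding p_split(1) by (auto simp: successively_append_iff)
    show "walk R (w # ts)" "last (w # ts) = b"
      using q unfolding q_split by (auto simp: successively_append_iff)
    show "distinct (w # ys @ ts)"
      using p(5) q(5) p_split(3) unfolding p_split(1) q_split by auto
  qed
qed

definition adjacent :: "('a \<times> 'a) set \<Rightarrow> 'a \<Rightarrow> 'a \<Rightarrow> bool" where
  "adjacent A x y \<longleftrightarrow> (x, y) \<in> A \<or> (y, x) \<in> A"

lemma successively_adjacent_flip [simp]:
  "successively (\<lambda>x y. adjacent A y x) xs \<longleftrightarrow> successively (adjacent A) xs"
  by (induction xs rule: induct_list012) (auto simp: adjacent_def)

lemma walk_imp_successively_adjacent: "walk R p \<Longrightarrow> R \<subseteq> A \<Longrightarrow> successively (adjacent A) p"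
  by (erule successively_mono) (auto simp: adjacent_def)

lemma und_connected_path:
  assumes "successively (adjacent A) p" "distinct p"
  shows "und_connected A (set p)"
  unfolding und_connected_def
proof (intro ballI)
  fix u v assume uv: "u \<in> set p" "v \<in> set p"
  let ?U = "und_adj A (set p)"
  have walk: "walk ?U p"
    using assms by (rule successively_mono_distinct) (auto simp: und_adj_def adjacent_def)
  have sym: "sym (?U\<^sup>*)" by (rule sym_rtrancl) (auto simp: sym_def und_adj_def)
  have "(u, last p) \<in> ?U\<^sup>*" using walk uv(1) by (rule walk_rtrancl_last)
  moreover have "(last p, v) \<in> ?U\<^sup>*" using symD[OF sym walk_rtrancl_last[OF walk uv(2)]] .
  ultimately show "(u, v) \<in> ?U\<^sup>*" by (rule rtrancl_trans)
qed

lemma biconnected_cycle: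
  assumes "distinct c" "3 \<le> length c"
    and "successively (adjacent A) c" "adjacent A (last c) (hd c)"
  shows "biconnected A (set c)"
  unfolding biconnected_def
proof (intro conjI ballI)
  show "finite (set c)" by simp
  show "3 \<le> card (set c)" using assms by (simp add: distinct_card)
  show "und_connected A (set c)" using assms by (intro und_connected_path) auto
  fix v assume "v \<in> set c"
  then obtain xs ys where c: "c = xs @ v # ys" by (meson split_list)
  \<comment> \<open>deleting \<open>v\<close> leaves the path \<open>ys @ xs\<close>, glued at the closing edge of the cycle\<close>
  have "successively (adjacent A) xs" "successively (adjacent A) ys"
    using assms(3) unfolding c by (auto simp: successively_append_iff successively_Cons)
  moreover have "adjacent A (last ys) (hd xs)" if "xs \<noteq> []" "ys \<noteq> []"
    using assms(4) that unfolding c by simp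
  ultimately have "successively (adjacent A) (ys @ xs)"
    by (auto simp: successively_append_iff)
  moreover have "distinct (ys @ xs)" "set (ys @ xs) = set c - {v}"
    using assms(1) unfolding c by auto
  ultimately show "und_connected A (set c - {v})" by (metis und_connected_path)
qed

lemma biconnected_cycle_through_apex:
  assumes "a \<notin> S" "k \<in> S" "b \<in> S" "k \<noteq> b" "(k, a) \<in> A" "adjacent A a b"
    and "(u, k) \<in> (A \<inter> S \<times> S)\<^sup>*" "(u, b) \<in> (A \<inter> S \<times> S)\<^sup>*"
  obtains X where "{a, b, k} \<subseteq> X" "X \<subseteq> insert a S" "biconnected A X"
    "\<forall>x\<in>X. x = a \<or> (x, k) \<in> (A \<inter> X \<times> X)\<^sup>* \<or> (x, b) \<in> (A \<inter> X \<times> X)\<^sup>*"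
proof -
  let ?R = "A \<inter> S \<times> S"
  obtain w ys ts where ys: "walk ?R (w # ys)" "last (w # ys) = k"
    and ts: "walk ?R (w # ts)" "last (w # ts) = b" and dist: "distinct (w # ys @ ts)"
    using assms(7,8) by (rule walks_obtain_last_meet)
  have in_S: "set (w # ys) \<subseteq> S" "set (w # ts) \<subseteq> S"
    using walk_rtrancl_last[OF ys(1)] walk_rtrancl_last[OF ts(1)] ys(2) ts(2) assms(2,3)
    by (auto intro: rtrancl_restrict_source_mem)
  define c where "c = a # rev (w # ts) @ ys"
  have set_c: "set c = insert a (set (w # ts) \<union> set (w # ys))" by (auto simp: c_def)
  have abk: "{a, b, k} \<subseteq> set c"
    using last_in_set[of "w # ys"] last_in_set[of "w # ts"] ys(2) ts(2) by (auto simp: set_c)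
  have "distinct c" using dist in_S assms(1) by (auto simp: c_def)
  moreover have "3 \<le> length c"
  proof -
    have "a \<noteq> b" "a \<noteq> k" using assms(1-3) by auto
    then have "card {a, b, k} = 3" using assms(4) by simp
    then show ?thesis using card_mono[OF finite_set abk] card_length[of c] by linarith
  qed
  moreover have "successively (adjacent A) c"
  proof -
    have "successively (adjacent A) (w # ys)" "successively (adjacent A) (w # ts)"
      using walk_imp_successively_adjacent[OF ys(1)] walk_imp_successively_adjacent[OF ts(1)]
      by auto
    then have "successively (adjacent A) (rev (w # ts) @ ys)"
      by (cases ys) (auto simp: successively_append_iff last_rev simp del: rev.simps)
    moreover have "hd (rev (w # ts) @ ys) = b" using ts(2) by (cases ts rule: rev_cases) auto
    ultimately show ?thesis unfolding c_def successively_Cons using assms(6) by blast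
  qed
  moreover have "adjacent A (last c) (hd c)"
    using assms(5) ys(2) by (cases ys) (auto simp: c_def adjacent_def)
  ultimately have "biconnected A (set c)" by (rule biconnected_cycle)
  moreover have "set c \<subseteq> insert a S" using set_c in_S by auto
  moreover have "x = a \<or> (x, k) \<in> (A \<inter> set c \<times> set c)\<^sup>* \<or> (x, b) \<in> (A \<inter> set c \<times> set c)\<^sup>*"
    if "x \<in> set c" for x
  proof -
    let ?E = "A \<inter> set c \<times> set c"
    have "walk ?E (w # ys)" using ys(1) by (rule successively_mono) (auto simp: set_c)
    moreover have "walk ?E (w # ts)" using ts(1) by (rule successively_mono) (auto simp: set_c)
    ultimately show ?thesis
      using that walk_rtrancl_last[of ?E "w # ys" x] walk_rtrancl_last[of ?E "w # ts" x] ys(2) ts(2)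
      unfolding set_c by auto
  qed
  ultimately show thesis using abk by (intro that) auto
qed

lemma apex_pair_root_reachable:
  assumes "{a, b, k} \<subseteq> X" "(k, a) \<in> A" "adjacent A a b"
    and "\<forall>x\<in>X. x = a \<or> (x, k) \<in> (A \<inter> X \<times> X)\<^sup>* \<or> (x, b) \<in> (A \<inter> X \<times> X)\<^sup>*"
  shows "\<forall>x\<in>X. reach_in A X x (if (b, a) \<in> A then a else b)"
proof
  let ?E = "A \<inter> X \<times> X" and ?r = "if (b, a) \<in> A then a else b"
  have a_r: "(a, ?r) \<in> ?E\<^sup>*" and b_r: "(b, ?r) \<in> ?E\<^sup>*"
    using assms(1,3) by (auto simp: adjacent_def)
  have "(k, a) \<in> ?E" using assms(1,2) by auto
  then have k_r: "(k, ?r) \<in> ?E\<^sup>*" using a_r by (rule converse_rtrancl_into_rtrancl)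
  fix x assume x: "x \<in> X"
  then consider "x = a" | "(x, k) \<in> ?E\<^sup>*" | "(x, b) \<in> ?E\<^sup>*" using assms(4) by blast
  then have "(x, ?r) \<in> ?E\<^sup>*" using a_r b_r k_r by cases (auto intro: rtrancl_trans)
  moreover have "?r \<in> X" using assms(1) by auto
  ultimately show "reach_in A X x ?r" using x by (simp add: reach_in_def)
qed

lemma not_dyn_partitioning_common_ancestor:
  assumes "\<not> dyn_partitioning V A j k {b}"
  obtains u where "(u, k) \<in> (A \<inter> (V - {j}) \<times> (V - {j}))\<^sup>*"
    "(u, b) \<in> (A \<inter> (V - {j}) \<times> (V - {j}))\<^sup>*"
  using assms unfolding dyn_partitioning_def f_E_def IN_set_def reach_in_def by blast

lemma gen_step_card: "gen_step V A Y Z \<Longrightarrow> finite Y \<Longrightarrow> card Z = Suc (card Y)"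
  by (auto simp: gen_step_def)

lemma gen_step_rtranclp_subset: "(gen_step V A)\<^sup>*\<^sup>* Y Z \<Longrightarrow> Y \<subseteq> Z"
  by (induction rule: rtranclp_induct) (auto simp: gen_step_def)

lemma generated_from_card_Suc:
  assumes "generated_from V A P W" "card W = Suc (card P)"
  shows "gen_step V A P W"
proof -
  have fin: "finite P" "finite W" and steps: "(gen_step V A)\<^sup>*\<^sup>* P W" "P \<noteq> W"
    using assms by (auto simp: generated_from_def)
  from steps obtain Y where step: "gen_step V A P Y" and rest: "(gen_step V A)\<^sup>*\<^sup>* Y W"
    by (metis converse_rtranclpE)
  from rest have "Y \<subseteq> W" by (rule gen_step_rtranclp_subset)
  moreover have "card Y = card W" using gen_step_card[OF step fin(1)] assms(2) by simp
  ultimately show ?thesis using step fin(2) card_subset_eq by metis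
qed

lemma generated_triple_from_connected_pair:
  assumes "connected_pair V A P" "generated_from V A P W" "card W = 3"
  obtains a b k where "W = {a, b, k}" "a \<noteq> b" "k \<notin> {a, b}" "(k, a) \<in> A" "adjacent A a b"
    "\<not> dyn_partitioning V A a k {b}"
proof -
  obtain i j where ij: "i \<noteq> j" "P = {i, j}" "adjacent A i j"
    using assms(1) by (auto simp: connected_pair_def adjacent_def)
  then have "gen_step V A P W"
    using assms(2,3) by (intro generated_from_card_Suc) auto
  then obtain k a where k: "k \<notin> P" "W = insert k P" and a: "a \<in> P" "(k, a) \<in> A"
    and "\<not> dyn_partitioning V A a k (P - {a})"
    unfolding gen_step_def by blast
  moreover obtain b where "P = {a, b}" "P - {a} = {b}" "adjacent A a b"
    using ij a(1) by (auto simp: adjacent_def)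
  ultimately show thesis by (intro that[of a b k]) auto
qed

theorem mainTheorem6:
  fixes V :: "'a set" and A :: "('a \<times> 'a) set" and W :: "'a set"
  assumes "finite V" and "A \<subseteq> V \<times> V"
    and "W \<subseteq> V" and "card W = 3"
    and "\<exists>P. connected_pair V A P \<and> generated_from V A P W"
  shows "\<exists>X. W \<subseteq> X \<and> X \<subseteq> V \<and> directed_sub_block A X \<and>
           (\<exists>i\<in>W. (\<forall>v\<in>W. reach_in A W v i) \<and> (\<forall>v\<in>X. reach_in A X v i))"
proof -
  obtain a b k where W: "W = {a, b, k}" "a \<noteq> b" "k \<notin> {a, b}" and ka: "(k, a) \<in> A"
    and ab: "adjacent A a b" and nd: "\<not> dyn_partitioning V A a k {b}"
    using assms(4,5) generated_triple_from_connected_pair by metis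
  obtain u where u: "(u, k) \<in> (A \<inter> (V - {a}) \<times> (V - {a}))\<^sup>*"
    "(u, b) \<in> (A \<inter> (V - {a}) \<times> (V - {a}))\<^sup>*"
    using nd by (rule not_dyn_partitioning_common_ancestor)
  have S: "a \<notin> V - {a}" "k \<in> V - {a}" "b \<in> V - {a}" "k \<noteq> b"
    using W assms(3) by auto
  obtain X where X: "{a, b, k} \<subseteq> X" "X \<subseteq> insert a (V - {a})" "biconnected A X"
    "\<forall>x\<in>X. x = a \<or> (x, k) \<in> (A \<inter> X \<times> X)\<^sup>* \<or> (x, b) \<in> (A \<inter> X \<times> X)\<^sup>*"
    using biconnected_cycle_through_apex[OF S ka ab u] .
  let ?r = "if (b, a) \<in> A then a else b"
  have "\<forall>x\<in>X. reach_in A X x ?r" using X(1) ka ab X(4) by (rule apex_pair_root_reachable)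
  moreover have "\<forall>x\<in>W. reach_in A W x ?r"
    unfolding W(1) using ka ab by (rule apex_pair_root_reachable[OF order_refl]) auto
  moreover have "?r \<in> W" "W \<subseteq> X" "X \<subseteq> V" using W(1) X(1,2) assms(3) by auto
  ultimately show ?thesis using X(3) unfolding directed_sub_block_def by blast
qed

end
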